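(* Let $Q$ be a prime quiver with $\chi(Q)\ge2$ such that $(Q,0)$ is tight. (i) For every vertex $v\in Q_0$ we have $|\{a\in Q_1\mid a^-=v\}|\ge2$ and $|\{a\in Q_1\mid a^+=v\}|\ge2$. (ii) $|Q_0|\le\chi(Q)-1$, and consequently $|Q_1|=|Q_0|+\chi(Q)-1\le2(\chi(Q)-1)$.
   Context: A quiver $Q$: vertices $Q_0$, arrows $Q_1$, $a$ from $a^-$ to $a^+$ (loops, multiple arrows, oriented cycles allowed). $\chi(Q)=|Q_1|-|Q_0|+(\text{number of connected components of the underlying graph})$. $Q$ is prime if its underlying graph is connected, has at least one edge, and is not the union of two full proper subgraphs having exactly one common vertex. For $\theta\in\mathbb{Z}^{Q_0}$, $\nabla(Q,\theta)=\{x\in\mathbb{R}_{\ge0}^{Q_1}\mid\forall v:\ \theta(v)=\sum_{a^+=v}x(a)-\sum_{a^-=v}x(a)\}$. Integral-affine equivalence of lattice polyhedra: an affine isomorphism of affine spans mapping lattice points of the span onto lattice points of the span and the polyhedron onto the polyhedron. An arrow $a$ is removable if $\nabla(Q,\theta)$ is integral-affinely equivalent to $\nabla(Q',\theta)$, $Q'$ being $Q$ with $a$ deleted; contracting a non-loop arrow $a$ gives $(\hat Q,\hat\theta)$ (delete $a$, glue $a^\pm$ into one vertex $v$, $\hat\theta(v)=\theta(a^-)+\theta(a^+)$, $\hat\theta=\theta$ elsewhere), and $a$ is contractable if $\nabla(Q,\theta)$ is integral-affinely equivalent to $\nabla(\hat Q,\hat\theta)$. $(Q,\theta)$ is tight if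 no arrow is removable or contractable. *)

theory Defs
  imports "HOL-Analysis.Analysis"
begin

text \<open>A quiver is given by a vertex set V, an arrow set A, and source/target maps
  s (a^-) and t (a^+). Vectors in R^{Q_1} are functions 'a \<Rightarrow> real vanishing off A.\<close>

definition quiver :: "'v set \<Rightarrow> 'a set \<Rightarrow> ('a \<Rightarrow> 'v) \<Rightarrow> ('a \<Rightarrow> 'v) \<Rightarrow> bool" where
  "quiver V A s t \<longleftrightarrow> finite V \<and> finite A \<and> s ` A \<subseteq> V \<and> t ` A \<subseteq> V"

definition flow_polytope ::
  "'v set \<Rightarrow> 'a set \<Rightarrow> ('a \<Rightarrow> 'v) \<Rightarrow> ('a \<Rightarrow> 'v) \<Rightarrow> ('v \<Rightarrow> int) \<Rightarrow> ('a \<Rightarrow> real) set" where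
  "flow_polytope V A s t \<theta> =
     {x. (\<forall>a. a \<notin> A \<longrightarrow> x a = 0) \<and> (\<forall>a\<in>A. x a \<ge> 0) \<and>
         (\<forall>v\<in>V. real_of_int (\<theta> v) =
             (\<Sum>a\<in>{a\<in>A. t a = v}. x a) - (\<Sum>a\<in>{a\<in>A. s a = v}. x a))}"

definition aff_hull :: "('a \<Rightarrow> real) set \<Rightarrow> ('a \<Rightarrow> real) set" where
  "aff_hull S = {x. \<exists>F u. finite F \<and> F \<subseteq> S \<and> F \<noteq> {} \<and> sum u F = 1 \<and>
                       x = (\<lambda>i. \<Sum>y\<in>F. u y * y i)}"

definition int_points :: "'a set \<Rightarrow> ('a \<Rightarrow> real) set" where
  "int_points A = {x. \<forall>a\<in>A. x a \<in> \<int>}"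

definition int_aff_equiv ::
  "'a set \<Rightarrow> ('a \<Rightarrow> real) set \<Rightarrow> 'a set \<Rightarrow> ('a \<Rightarrow> real) set \<Rightarrow> bool" where
  "int_aff_equiv A P A' P' \<longleftrightarrow>
     (\<exists>f. bij_betw f (aff_hull P) (aff_hull P') \<and>
          (\<forall>x\<in>aff_hull P. \<forall>y\<in>aff_hull P. \<forall>c::real.
              f (\<lambda>i. (1 - c) * x i + c * y i) = (\<lambda>i. (1 - c) * f x i + c * f y i)) \<and>
          f ` (aff_hull P \<inter> int_points A) = aff_hull P' \<inter> int_points A' \<and>
          f ` P = P')"

definition removable ::
  "'v set \<Rightarrow> 'a set \<Rightarrow> ('a \<Rightarrow> 'v) \<Rightarrow> ('a \<Rightarrow> 'v) \<Rightarrow> ('v \<Rightarrow> int) \<Rightarrow> 'a \<Rightarrow> bool" where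
  "removable V A s t \<theta> a \<longleftrightarrow>
     int_aff_equiv A (flow_polytope V A s t \<theta>) (A - {a}) (flow_polytope V (A - {a}) s t \<theta>)"

text \<open>Contraction of a non-loop arrow a: the target t a is glued onto the source s a
  (the glued vertex is represented by s a).\<close>
definition glue :: "('a \<Rightarrow> 'v) \<Rightarrow> ('a \<Rightarrow> 'v) \<Rightarrow> 'a \<Rightarrow> 'v \<Rightarrow> 'v" where
  "glue s t a w = (if w = t a then s a else w)"

definition contract_theta ::
  "('a \<Rightarrow> 'v) \<Rightarrow> ('a \<Rightarrow> 'v) \<Rightarrow> ('v \<Rightarrow> int) \<Rightarrow> 'a \<Rightarrow> 'v \<Rightarrow> int" where
  "contract_theta s t \<theta> a w = (if w = s a then \<theta> (s a) + \<theta> (t a) else \<theta> w)"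

definition contractable ::
  "'v set \<Rightarrow> 'a set \<Rightarrow> ('a \<Rightarrow> 'v) \<Rightarrow> ('a \<Rightarrow> 'v) \<Rightarrow> ('v \<Rightarrow> int) \<Rightarrow> 'a \<Rightarrow> bool" where
  "contractable V A s t \<theta> a \<longleftrightarrow> s a \<noteq> t a \<and>
     int_aff_equiv A (flow_polytope V A s t \<theta>)
       (A - {a}) (flow_polytope (V - {t a}) (A - {a}) (glue s t a \<circ> s) (glue s t a \<circ> t)
                    (contract_theta s t \<theta> a))"

definition tight :: "'v set \<Rightarrow> 'a set \<Rightarrow> ('a \<Rightarrow> 'v) \<Rightarrow> ('a \<Rightarrow> 'v) \<Rightarrow> ('v \<Rightarrow> int) \<Rightarrow> bool" where
  "tight V A s t \<theta> \<longleftrightarrow> (\<forall>a\<in>A. \<not> removable V A s t \<theta> a \<and> \<not> contractable V A s t \<theta> a)"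

definition und_edges :: "'a set \<Rightarrow> ('a \<Rightarrow> 'v) \<Rightarrow> ('a \<Rightarrow> 'v) \<Rightarrow> ('v \<times> 'v) set" where
  "und_edges A s t = {(s a, t a) | a. a \<in> A} \<union> {(t a, s a) | a. a \<in> A}"

definition conn_rel :: "'v set \<Rightarrow> 'a set \<Rightarrow> ('a \<Rightarrow> 'v) \<Rightarrow> ('a \<Rightarrow> 'v) \<Rightarrow> ('v \<times> 'v) set" where
  "conn_rel V A s t = {(u, w). u \<in> V \<and> w \<in> V \<and> (u, w) \<in> (und_edges A s t)\<^sup>*}"

definition num_components :: "'v set \<Rightarrow> 'a set \<Rightarrow> ('a \<Rightarrow> 'v) \<Rightarrow> ('a \<Rightarrow> 'v) \<Rightarrow> nat" where
  "num_components V A s t = card (V // conn_rel V A s t)"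

definition chi :: "'v set \<Rightarrow> 'a set \<Rightarrow> ('a \<Rightarrow> 'v) \<Rightarrow> ('a \<Rightarrow> 'v) \<Rightarrow> int" where
  "chi V A s t = int (card A) - int (card V) + int (num_components V A s t)"

definition prime_quiver :: "'v set \<Rightarrow> 'a set \<Rightarrow> ('a \<Rightarrow> 'v) \<Rightarrow> ('a \<Rightarrow> 'v) \<Rightarrow> bool" where
  "prime_quiver V A s t \<longleftrightarrow>
     num_components V A s t = 1 \<and> A \<noteq> {} \<and>
     \<not> (\<exists>V1 V2. V1 \<subset> V \<and> V2 \<subset> V \<and> V1 \<union> V2 = V \<and> card (V1 \<inter> V2) = 1 \<and>
              (\<forall>a\<in>A. (s a \<in> V1 \<and> t a \<in> V1) \<or> (s a \<in> V2 \<and> t a \<in> V2)))"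

end

theory Submission
  imports Defs
begin

text \<open>
  For \<theta> = 0 a point of the flow polytope is a circulation. If every arrow leaving a vertex v
  is a loop, conservation at v forces the flow on each arrow entering v from elsewhere to
  vanish, so such an arrow is removable. If a non-loop arrow b is the only arrow leaving its
  tail (or the only one entering its head), then deleting b is inverted by recovering the
  flow on b from conservation at that vertex, and the recovered value is automatically
  nonnegative, so b is contractable. In a tight quiver every vertex therefore has
  out-degree at least 2, unless all arrows at it are loops, which connectedness and
  \<chi> \<ge> 2 exclude; of primality only connectedness is used. In-degrees follow by reversing
  all arrows, which does not change the polytope for \<theta> = 0. Summing out-degrees shows
  that there are at least twice as many arrows as vertices, and \<chi> = #arrows - #vertices + 1
  gives (ii).
\<close>

section \<open>Integral-affine equivalences from linear bijections\<close>

text \<open>Linearity on real functions, phrased via finite combinations since function spaces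
  carry no real_vector instance.\<close>
definition preserves_combinations :: "(('a \<Rightarrow> real) \<Rightarrow> ('a \<Rightarrow> real)) \<Rightarrow> bool" where
  "preserves_combinations f \<longleftrightarrow>
     (\<forall>(F :: ('a \<Rightarrow> real) set) u h.
        f (\<lambda>i. \<Sum>y\<in>F. u y * h y i) = (\<lambda>i. \<Sum>y\<in>F. u y * f (h y) i))"

lemma preserves_combinationsD:
  fixes f :: "('a \<Rightarrow> real) \<Rightarrow> 'a \<Rightarrow> real" and F :: "('a \<Rightarrow> real) set"
  assumes "preserves_combinations f"
  shows "f (\<lambda>i. \<Sum>y\<in>F. u y * h y i) = (\<lambda>i. \<Sum>y\<in>F. u y * f (h y) i)"
  using assms unfolding preserves_combinations_def by simp

lemma preserves_combinations_affine:
  assumes "preserves_combinations f"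
  shows "f (\<lambda>i. (1 - c) * x i + c * y i) = (\<lambda>i. (1 - c) * f x i + c * f y i)"
proof (cases "x = y")
  case True
  then show ?thesis
    using preserves_combinationsD[OF assms, where F="{x}" and u="\<lambda>_. 1" and h=id]
    by (simp add: algebra_simps)
next
  case False
  then show ?thesis
    using preserves_combinationsD[OF assms, where F="{x, y}" and h=id
        and u="\<lambda>z. if z = x then 1 - c else c"]
    by simp
qed

lemma preserves_combinations_fun_upd:
  fixes L :: "('a \<Rightarrow> real) \<Rightarrow> real"
  assumes L: "\<And>(F :: ('a \<Rightarrow> real) set) u h.
                L (\<lambda>i. \<Sum>y\<in>F. u y * h y i) = (\<Sum>y\<in>F. u y * L (h y))"
  shows "preserves_combinations (\<lambda>x. x(b := L x))"
  unfolding preserves_combinations_def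
proof (intro allI ext)
  fix F :: "('a \<Rightarrow> real) set" and u h i
  show "((\<lambda>i. \<Sum>y\<in>F. u y * h y i)(b := L (\<lambda>i. \<Sum>y\<in>F. u y * h y i))) i
        = (\<Sum>y\<in>F. u y * ((h y)(b := L (h y))) i)"
    using L[where F=F and u=u and h=h] by simp
qed

lemma image_aff_hull_subset:
  assumes f: "preserves_combinations f" and inj: "inj_on f P" and "f ` P \<subseteq> P'"
  shows "f ` aff_hull P \<subseteq> aff_hull P'"
proof
  fix z assume "z \<in> f ` aff_hull P"
  then obtain F u where F: "finite F" "F \<subseteq> P" "F \<noteq> {}" "sum u F = 1"
    and z: "z = f (\<lambda>i. \<Sum>y\<in>F. u y * y i)"
    unfolding aff_hull_def by blast
  have injF: "inj_on f F" using inj F(2) inj_on_subset by blast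
  define u' where "u' = u \<circ> inv_into F f"
  have "sum u' (f ` F) = 1"
    using F(4) by (simp add: sum.reindex[OF injF] u'_def inv_into_f_f[OF injF])
  moreover have "z = (\<lambda>i. \<Sum>w\<in>f ` F. u' w * w i)"
    using preserves_combinationsD[OF f, where F=F and u=u and h=id]
    by (simp add: z sum.reindex[OF injF] u'_def inv_into_f_f[OF injF])
  moreover have "finite (f ` F)" "f ` F \<subseteq> P'" "f ` F \<noteq> {}"
    using F assms(3) by auto
  ultimately show "z \<in> aff_hull P'"
    unfolding aff_hull_def by blast
qed

lemma inverse_on_aff_hull:
  assumes f: "preserves_combinations f" and g: "preserves_combinations g"
    and gf: "\<forall>x\<in>P. g (f x) = x" and x: "x \<in> aff_hull P"
  shows "g (f x) = x"
proof -
  obtain F u where F: "F \<subseteq> P" and x_eq: "x = (\<lambda>i. \<Sum>y\<in>F. u y * y i)"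
    using x unfolding aff_hull_def by blast
  have "g (f x) = (\<lambda>i. \<Sum>y\<in>F. u y * g (f y) i)"
    using preserves_combinationsD[OF f, where F=F and u=u and h=id]
      preserves_combinationsD[OF g, where F=F and u=u and h=f]
    by (simp add: x_eq)
  also have "\<dots> = x"
    using F gf by (simp add: x_eq subset_iff)
  finally show ?thesis .
qed

text \<open>Being linear, f and g map affine spans into affine spans and stay mutually inverse
  there.\<close>
lemma int_aff_equivI:
  assumes f: "preserves_combinations f" and g: "preserves_combinations g"
    and fP: "f ` P \<subseteq> P'" and gP: "g ` P' \<subseteq> P"
    and gf: "\<forall>x\<in>P. g (f x) = x" and fg: "\<forall>y\<in>P'. f (g y) = y"
    and f_int: "\<And>x. x \<in> int_points A \<Longrightarrow> f x \<in> int_points A'"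
    and g_int: "\<And>y. y \<in> int_points A' \<Longrightarrow> g y \<in> int_points A"
  shows "int_aff_equiv A P A' P'"
proof -
  have hull_f: "f ` aff_hull P \<subseteq> aff_hull P'"
    using image_aff_hull_subset[OF f _ fP] gf by (metis inj_on_inverseI)
  have hull_g: "g ` aff_hull P' \<subseteq> aff_hull P"
    using image_aff_hull_subset[OF g _ gP] fg by (metis inj_on_inverseI)
  have gf': "\<forall>x\<in>aff_hull P. g (f x) = x" and fg': "\<forall>y\<in>aff_hull P'. f (g y) = y"
    using inverse_on_aff_hull[OF f g gf] inverse_on_aff_hull[OF g f fg] by blast+
  have "bij_betw f (aff_hull P) (aff_hull P')"
    using hull_f hull_g gf' fg' by (intro bij_betw_byWitness[where f'=g]) auto
  moreover have "f ` (aff_hull P \<inter> int_points A) = aff_hull P' \<inter> int_points A'"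
  proof
    show "aff_hull P' \<inter> int_points A' \<subseteq> f ` (aff_hull P \<inter> int_points A)"
    proof
      fix y assume y: "y \<in> aff_hull P' \<inter> int_points A'"
      then have "g y \<in> aff_hull P \<inter> int_points A" using hull_g g_int by blast
      then show "y \<in> f ` (aff_hull P \<inter> int_points A)" using fg' y by (metis IntD1 image_eqI)
    qed
  qed (use hull_f f_int in blast)
  moreover have "f ` P = P'"
  proof
    show "P' \<subseteq> f ` P" using gP fg by (metis image_eqI image_subset_iff subsetI)
  qed (rule fP)
  ultimately show ?thesis
    unfolding int_aff_equiv_def using preserves_combinations_affine[OF f] by blast
qed

section \<open>Flows\<close>

definition flow_sum :: "'a set \<Rightarrow> ('a \<Rightarrow> 'v) \<Rightarrow> 'v \<Rightarrow> ('a \<Rightarrow> real) \<Rightarrow> real" where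
  "flow_sum B e v x = (\<Sum>a\<in>{a\<in>B. e a = v}. x a)"

definition net_inflow :: "'a set \<Rightarrow> ('a \<Rightarrow> 'v) \<Rightarrow> ('a \<Rightarrow> 'v) \<Rightarrow> 'v \<Rightarrow> ('a \<Rightarrow> real) \<Rightarrow> real" where
  "net_inflow B s t v x = flow_sum B t v x - flow_sum B s v x"

lemma flow_polytope_iff:
  "x \<in> flow_polytope V A s t \<theta> \<longleftrightarrow>
     (\<forall>a. a \<notin> A \<longrightarrow> x a = 0) \<and> (\<forall>a\<in>A. 0 \<le> x a) \<and>
     (\<forall>v\<in>V. real_of_int (\<theta> v) = net_inflow A s t v x)"
  unfolding flow_polytope_def net_inflow_def flow_sum_def by auto

lemma flow_sum_remove:
  assumes "finite B" "b \<in> B"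
  shows "flow_sum B e v x = flow_sum (B - {b}) e v x + (if e b = v then x b else 0)"
proof (cases "e b = v")
  case True
  then have "{a\<in>B. e a = v} = insert b {a\<in>B - {b}. e a = v}" using assms(2) by blast
  then show ?thesis using True assms(1) by (simp add: flow_sum_def)
next
  case False
  then have "{a\<in>B. e a = v} = {a\<in>B - {b}. e a = v}" by blast
  then show ?thesis using False by (simp add: flow_sum_def)
qed

lemma net_inflow_remove:
  assumes "finite B" "b \<in> B"
  shows "net_inflow B s t v x = net_inflow (B - {b}) s t v x
           + (if t b = v then x b else 0) - (if s b = v then x b else 0)"
  using flow_sum_remove[OF assms, of t v x] flow_sum_remove[OF assms, of s v x]
  by (simp add: net_inflow_def)

lemma flow_sum_fun_upd: "b \<notin> B \<Longrightarrow> flow_sum B e v (x(b := c)) = flow_sum B e v x"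
  unfolding flow_sum_def by (rule sum.cong) auto

lemma net_inflow_fun_upd: "b \<notin> B \<Longrightarrow> net_inflow B s t v (x(b := c)) = net_inflow B s t v x"
  by (simp add: net_inflow_def flow_sum_fun_upd)

lemma net_inflow_combination:
  "net_inflow B s t v (\<lambda>i. \<Sum>y\<in>F. u y * h y i) = (\<Sum>y\<in>F. u y * net_inflow B s t v (h y))"
  unfolding net_inflow_def flow_sum_def
  by (simp add: sum_distrib_left sum.swap[of _ F] right_diff_distrib sum_subtractf)

lemma net_inflow_Ints: "\<forall>a\<in>B. x a \<in> \<int> \<Longrightarrow> net_inflow B s t v x \<in> \<int>"
  unfolding net_inflow_def flow_sum_def by (intro Ints_diff Ints_sum) auto

lemma flow_sum_nonneg: "\<forall>a\<in>B. 0 \<le> x a \<Longrightarrow> 0 \<le> flow_sum B e v x"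
  unfolding flow_sum_def by (rule sum_nonneg) auto

lemma flow_sum_eq_0: "\<forall>a\<in>B. e a \<noteq> v \<Longrightarrow> flow_sum B e v x = 0"
  unfolding flow_sum_def by (rule sum.neutral) auto

lemma flow_into_sink_vanishes:
  assumes "finite A" "v \<in> V" and sink: "\<forall>a'\<in>A. s a' = v \<longrightarrow> t a' = v"
    and "a \<in> A" "t a = v" "s a \<noteq> v"
    and x: "x \<in> flow_polytope V A s t (\<lambda>_. 0)"
  shows "x a = 0"
proof -
  let ?In = "{a\<in>A. t a = v}" and ?Out = "{a\<in>A. s a = v}"
  have nonneg: "\<forall>a\<in>A. 0 \<le> x a" and "net_inflow A s t v x = 0"
    using x \<open>v \<in> V\<close> unfolding flow_polytope_iff by auto
  moreover have "?Out \<subseteq> ?In" using sink by blast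
  ultimately have "(\<Sum>a\<in>?In - ?Out. x a) = 0"
    using sum.subset_diff[of ?Out ?In x] \<open>finite A\<close> by (simp add: net_inflow_def flow_sum_def)
  then have "\<forall>a\<in>?In - ?Out. x a = 0"
    using sum_nonneg_eq_0_iff[of "?In - ?Out" x] nonneg \<open>finite A\<close> by auto
  then show ?thesis using assms(4-6) by blast
qed

section \<open>Removable and contractable arrows\<close>

lemma flow_polytope_remove_iff:
  assumes "finite A" "a \<in> A" "x a = 0"
  shows "x \<in> flow_polytope V (A - {a}) s t \<theta> \<longleftrightarrow> x \<in> flow_polytope V A s t \<theta>"
proof -
  have "net_inflow (A - {a}) s t v x = net_inflow A s t v x" for v
    using net_inflow_remove[OF assms(1,2), of s t v x] assms(3) by simp
  moreover have "(\<forall>a'. a' \<notin> A - {a} \<longrightarrow> x a' = 0) \<longleftrightarrow> (\<forall>a'. a' \<notin> A \<longrightarrow> x a' = 0)"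
    using assms(3) by auto
  moreover have "(\<forall>a'\<in>A - {a}. 0 \<le> x a') \<longleftrightarrow> (\<forall>a'\<in>A. 0 \<le> x a')"
    using assms(3) by auto
  ultimately show ?thesis
    unfolding flow_polytope_iff by (simp only:)
qed

lemma removable_if_vanishing:
  assumes "finite A" "a \<in> A" and vanish: "\<forall>x\<in>flow_polytope V A s t \<theta>. x a = 0"
  shows "removable V A s t \<theta> a"
  unfolding removable_def
proof (rule int_aff_equivI[where f="\<lambda>x. x(a := 0)" and g="\<lambda>x. x(a := 0)"])
  let ?f = "\<lambda>x. x(a := 0)"
  show "preserves_combinations ?f" "preserves_combinations ?f"
    by (rule preserves_combinations_fun_upd, simp)+
  have in_P': "x a = 0" if "x \<in> flow_polytope V (A - {a}) s t \<theta>" for x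
    using that unfolding flow_polytope_iff by blast
  show "?f ` flow_polytope V A s t \<theta> \<subseteq> flow_polytope V (A - {a}) s t \<theta>"
  proof (rule image_subsetI)
    fix x assume x: "x \<in> flow_polytope V A s t \<theta>"
    then have "x a = 0" using vanish by blast
    then show "?f x \<in> flow_polytope V (A - {a}) s t \<theta>"
      using x flow_polytope_remove_iff[where x=x, OF assms(1,2)] fun_upd_idem by metis
  qed
  show "?f ` flow_polytope V (A - {a}) s t \<theta> \<subseteq> flow_polytope V A s t \<theta>"
  proof (rule image_subsetI)
    fix x assume x: "x \<in> flow_polytope V (A - {a}) s t \<theta>"
    then have "x a = 0" by (rule in_P')
    then show "?f x \<in> flow_polytope V A s t \<theta>"
      using x flow_polytope_remove_iff[where x=x, OF assms(1,2)] fun_upd_idem by metis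
  qed
  show "\<forall>x\<in>flow_polytope V A s t \<theta>. ?f (?f x) = x"
    using vanish by (simp add: fun_upd_idem)
  show "\<forall>x\<in>flow_polytope V (A - {a}) s t \<theta>. ?f (?f x) = x"
    using in_P' by (simp add: fun_upd_idem)
qed (auto simp: int_points_def)

lemma flow_sum_glue:
  assumes "finite B" "s b \<noteq> t b" "u \<noteq> t b"
  shows "flow_sum B (glue s t b \<circ> e) u y
           = flow_sum B e u y + (if u = s b then flow_sum B e (t b) y else 0)"
proof (cases "u = s b")
  case True
  then have "{a\<in>B. (glue s t b \<circ> e) a = u} = {a\<in>B. e a = u} \<union> {a\<in>B. e a = t b}"
    unfolding glue_def by auto
  moreover have "{a\<in>B. e a = u} \<inter> {a\<in>B. e a = t b} = {}" using assms(3) by auto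
  ultimately show ?thesis
    using True \<open>finite B\<close> by (simp add: flow_sum_def sum.union_disjoint)
next
  case False
  then have "{a\<in>B. (glue s t b \<circ> e) a = u} = {a\<in>B. e a = u}"
    using assms(3) unfolding glue_def by auto
  then show ?thesis using False by (simp add: flow_sum_def)
qed

lemma net_inflow_glue:
  assumes "finite B" "s b \<noteq> t b" "u \<noteq> t b"
  shows "net_inflow B (glue s t b \<circ> s) (glue s t b \<circ> t) u y
           = net_inflow B s t u y + (if u = s b then net_inflow B s t (t b) y else 0)"
  using flow_sum_glue[where s=s and t=t and b=b and e=s, OF assms]
    flow_sum_glue[where s=s and t=t and b=b and e=t, OF assms]
  by (simp add: net_inflow_def)

lemma flow_polytope_zero_iff_at_arrow:
  assumes "finite A" "b \<in> A" "s b \<noteq> t b" "s b \<in> V" "t b \<in> V"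
  shows "x \<in> flow_polytope V A s t (\<lambda>_. 0) \<longleftrightarrow>
     (\<forall>a. a \<notin> A \<longrightarrow> x a = 0) \<and> (\<forall>a\<in>A. 0 \<le> x a) \<and>
     x b = net_inflow (A - {b}) s t (s b) x \<and> x b = - net_inflow (A - {b}) s t (t b) x \<and>
     (\<forall>u\<in>V - {s b, t b}. net_inflow (A - {b}) s t u x = 0)"
proof -
  have net: "net_inflow A s t u x = net_inflow (A - {b}) s t u x
               + (if t b = u then x b else 0) - (if s b = u then x b else 0)" for u
    by (rule net_inflow_remove[OF assms(1,2)])
  have "(\<forall>v\<in>V. 0 = net_inflow A s t v x) \<longleftrightarrow>
          x b = net_inflow (A - {b}) s t (s b) x \<and> x b = - net_inflow (A - {b}) s t (t b) x \<and>
          (\<forall>u\<in>V - {s b, t b}. net_inflow (A - {b}) s t u x = 0)"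
    using assms(3-5) net by auto
  then show ?thesis
    unfolding flow_polytope_iff by simp
qed

lemma contracted_flow_polytope_iff:
  assumes "finite A" "s b \<noteq> t b" "s b \<in> V"
  shows "y \<in> flow_polytope (V - {t b}) (A - {b}) (glue s t b \<circ> s) (glue s t b \<circ> t)
                (contract_theta s t (\<lambda>_. 0) b) \<longleftrightarrow>
     (\<forall>a. a \<notin> A - {b} \<longrightarrow> y a = 0) \<and> (\<forall>a\<in>A - {b}. 0 \<le> y a) \<and>
     net_inflow (A - {b}) s t (s b) y = - net_inflow (A - {b}) s t (t b) y \<and>
     (\<forall>u\<in>V - {s b, t b}. net_inflow (A - {b}) s t u y = 0)"
proof -
  have theta: "contract_theta s t (\<lambda>_. 0) b = (\<lambda>_. 0)"
    by (simp add: contract_theta_def fun_eq_iff)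
  have net: "net_inflow (A - {b}) (glue s t b \<circ> s) (glue s t b \<circ> t) u y
      = net_inflow (A - {b}) s t u y + (if u = s b then net_inflow (A - {b}) s t (t b) y else 0)"
    if "u \<noteq> t b" for u
    using net_inflow_glue[where B="A - {b}" and s=s and t=t and b=b and u=u and y=y]
      assms(1,2) that
    by simp
  have "(\<forall>v\<in>V - {t b}. 0 = net_inflow (A - {b}) (glue s t b \<circ> s) (glue s t b \<circ> t) v y)
      \<longleftrightarrow> net_inflow (A - {b}) s t (s b) y = - net_inflow (A - {b}) s t (t b) y \<and>
          (\<forall>u\<in>V - {s b, t b}. net_inflow (A - {b}) s t u y = 0)"
    using assms(2,3) net by auto
  then show ?thesis
    unfolding flow_polytope_iff theta by simp
qed

text \<open>Deleting b is inverted by reading off the flow on b from conservation at its tail;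
  the only obstruction is that this recovered flow must be nonnegative.\<close>
lemma contractable_if_net_inflow_nonneg:
  assumes "finite A" "b \<in> A" "s b \<noteq> t b" "s b \<in> V" "t b \<in> V"
    and nonneg: "\<forall>y\<in>flow_polytope (V - {t b}) (A - {b}) (glue s t b \<circ> s) (glue s t b \<circ> t)
                     (contract_theta s t (\<lambda>_. 0) b). 0 \<le> net_inflow (A - {b}) s t (s b) y"
  shows "contractable V A s t (\<lambda>_. 0) b"
  unfolding contractable_def
proof (intro conjI int_aff_equivI[where f="\<lambda>x. x(b := 0)"
                                  and g="\<lambda>y. y(b := net_inflow (A - {b}) s t (s b) y)"])
  note P = flow_polytope_zero_iff_at_arrow[where s=s and t=t and b=b, OF assms(1-5)]
  note P' = contracted_flow_polytope_iff[where s=s and t=t and b=b, OF assms(1,3,4)]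
  have net_upd: "net_inflow (A - {b}) s t u (x(b := c)) = net_inflow (A - {b}) s t u x" for u x c
    by (simp add: net_inflow_fun_upd)
  show "s b \<noteq> t b" by (fact assms(3))
  show "preserves_combinations (\<lambda>x. x(b := 0))"
    by (rule preserves_combinations_fun_upd) simp
  show "preserves_combinations (\<lambda>y. y(b := net_inflow (A - {b}) s t (s b) y))"
    by (rule preserves_combinations_fun_upd) (rule net_inflow_combination)
  show "(\<lambda>x. x(b := 0)) ` flow_polytope V A s t (\<lambda>_. 0)
    \<subseteq> flow_polytope (V - {t b}) (A - {b}) (glue s t b \<circ> s) (glue s t b \<circ> t)
        (contract_theta s t (\<lambda>_. 0) b)"
  proof (rule image_subsetI)
    fix x assume "x \<in> flow_polytope V A s t (\<lambda>_. 0)"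
    then show "x(b := 0) \<in> flow_polytope (V - {t b}) (A - {b}) (glue s t b \<circ> s)
                 (glue s t b \<circ> t) (contract_theta s t (\<lambda>_. 0) b)"
      unfolding P P' by (auto simp: net_upd)
  qed
  show "(\<lambda>y. y(b := net_inflow (A - {b}) s t (s b) y)) `
      flow_polytope (V - {t b}) (A - {b}) (glue s t b \<circ> s) (glue s t b \<circ> t)
        (contract_theta s t (\<lambda>_. 0) b)
    \<subseteq> flow_polytope V A s t (\<lambda>_. 0)"
  proof (rule image_subsetI)
    fix y
    assume y: "y \<in> flow_polytope (V - {t b}) (A - {b}) (glue s t b \<circ> s) (glue s t b \<circ> t)
                 (contract_theta s t (\<lambda>_. 0) b)"
    then have "0 \<le> net_inflow (A - {b}) s t (s b) y" using nonneg by blast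
    with y show "y(b := net_inflow (A - {b}) s t (s b) y) \<in> flow_polytope V A s t (\<lambda>_. 0)"
      using assms(2) unfolding P P' by (auto simp: net_upd)
  qed
  show "\<forall>x\<in>flow_polytope V A s t (\<lambda>_. 0).
      (x(b := 0))(b := net_inflow (A - {b}) s t (s b) (x(b := 0))) = x"
  proof
    fix x assume "x \<in> flow_polytope V A s t (\<lambda>_. 0)"
    then have "x b = net_inflow (A - {b}) s t (s b) x" unfolding P by blast
    then show "(x(b := 0))(b := net_inflow (A - {b}) s t (s b) (x(b := 0))) = x"
      by (simp add: net_upd fun_upd_idem_iff)
  qed
  show "\<forall>y\<in>flow_polytope (V - {t b}) (A - {b}) (glue s t b \<circ> s) (glue s t b \<circ> t)
                (contract_theta s t (\<lambda>_. 0) b).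
      (y(b := net_inflow (A - {b}) s t (s b) y))(b := 0) = y"
    by (auto simp: flow_polytope_iff fun_eq_iff)
  show "x(b := 0) \<in> int_points (A - {b})" if "x \<in> int_points A" for x
    using that by (simp add: int_points_def)
  show "y(b := net_inflow (A - {b}) s t (s b) y) \<in> int_points A"
    if "y \<in> int_points (A - {b})" for y
    using that by (simp add: int_points_def net_inflow_Ints)
qed

lemma contractable_if_unique_out_arrow:
  assumes "finite A" "b \<in> A" "s b \<noteq> t b" "s b \<in> V" "t b \<in> V"
    and unique: "\<forall>a\<in>A. s a = s b \<longrightarrow> a = b"
  shows "contractable V A s t (\<lambda>_. 0) b"
proof (rule contractable_if_net_inflow_nonneg[where s=s and t=t and b=b, OF assms(1-5)],
       intro ballI)
  fix y assume "y \<in> flow_polytope (V - {t b}) (A - {b}) (glue s t b \<circ> s) (glue s t b \<circ> t)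
                      (contract_theta s t (\<lambda>_. 0) b)"
  then have "\<forall>a\<in>A - {b}. 0 \<le> y a"
    using contracted_flow_polytope_iff[where s=s and t=t and b=b, OF assms(1,3,4)] by blast
  moreover have "flow_sum (A - {b}) s (s b) y = 0"
    using unique by (intro flow_sum_eq_0) blast
  ultimately show "0 \<le> net_inflow (A - {b}) s t (s b) y"
    by (simp add: net_inflow_def flow_sum_nonneg)
qed

lemma contractable_if_unique_in_arrow:
  assumes "finite A" "b \<in> A" "s b \<noteq> t b" "s b \<in> V" "t b \<in> V"
    and unique: "\<forall>a\<in>A. t a = t b \<longrightarrow> a = b"
  shows "contractable V A s t (\<lambda>_. 0) b"
proof (rule contractable_if_net_inflow_nonneg[where s=s and t=t and b=b, OF assms(1-5)],
       intro ballI)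
  fix y assume "y \<in> flow_polytope (V - {t b}) (A - {b}) (glue s t b \<circ> s) (glue s t b \<circ> t)
                      (contract_theta s t (\<lambda>_. 0) b)"
  then have "\<forall>a\<in>A - {b}. 0 \<le> y a"
    and "net_inflow (A - {b}) s t (s b) y = - net_inflow (A - {b}) s t (t b) y"
    using contracted_flow_polytope_iff[where s=s and t=t and b=b, OF assms(1,3,4)] by blast+
  moreover have "flow_sum (A - {b}) t (t b) y = 0"
    using unique by (intro flow_sum_eq_0) blast
  ultimately show "0 \<le> net_inflow (A - {b}) s t (s b) y"
    by (simp add: net_inflow_def flow_sum_nonneg)
qed

section \<open>Degrees in tight quivers\<close>

lemma tight_nonvanishing:
  assumes "tight V A s t \<theta>" "finite A" "a \<in> A"
  shows "\<exists>x\<in>flow_polytope V A s t \<theta>. x a \<noteq> 0"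
proof (rule ccontr)
  assume "\<not> ?thesis"
  then have "\<forall>x\<in>flow_polytope V A s t \<theta>. x a = 0" by blast
  then have "removable V A s t \<theta> a" by (rule removable_if_vanishing[OF assms(2,3)])
  then show False using assms(1,3) unfolding tight_def by blast
qed

lemma tight_shared_tail:
  assumes "quiver V A s t" "tight V A s t (\<lambda>_. 0)" "b \<in> A" "s b \<noteq> t b"
  shows "\<exists>a\<in>A. a \<noteq> b \<and> s a = s b"
proof (rule ccontr)
  assume "\<not> ?thesis"
  then have "contractable V A s t (\<lambda>_. 0) b"
    using assms(1,3,4) unfolding quiver_def
    by (intro contractable_if_unique_out_arrow[where s=s and t=t and b=b]) auto
  then show False using assms(2,3) unfolding tight_def by blast
qed

lemma tight_shared_head:
  assumes "quiver V A s t" "tight V A s t (\<lambda>_. 0)" "b \<in> A" "s b \<noteq> t b"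
  shows "\<exists>a\<in>A. a \<noteq> b \<and> t a = t b"
proof (rule ccontr)
  assume "\<not> ?thesis"
  then have "contractable V A s t (\<lambda>_. 0) b"
    using assms(1,3,4) unfolding quiver_def
    by (intro contractable_if_unique_in_arrow[where s=s and t=t and b=b]) auto
  then show False using assms(2,3) unfolding tight_def by blast
qed

lemma num_components_ne_1_if_isolated:
  assumes "finite V" "v \<in> V" "w \<in> V" "w \<noteq> v"
    and isolated: "\<forall>a\<in>A. s a = v \<or> t a = v \<longrightarrow> s a = v \<and> t a = v"
  shows "num_components V A s t \<noteq> 1"
proof -
  let ?r = "conn_rel V A s t"
  have stuck: "u = v" if "(v, u) \<in> (und_edges A s t)\<^sup>*" for u
    using that
  proof (induction rule: rtrancl_induct)
    case (step y z)
    then show ?case using isolated unfolding und_edges_def by auto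
  qed simp
  have "w \<notin> ?r `` {v}" using stuck \<open>w \<noteq> v\<close> unfolding conn_rel_def by auto
  moreover have "w \<in> ?r `` {w}" using \<open>w \<in> V\<close> unfolding conn_rel_def by auto
  ultimately have "?r `` {v} \<noteq> ?r `` {w}" by blast
  moreover have "?r `` {v} \<in> V // ?r" "?r `` {w} \<in> V // ?r"
    using \<open>v \<in> V\<close> \<open>w \<in> V\<close> by (auto intro: quotientI)
  moreover have "finite (V // ?r)"
    using \<open>finite V\<close> by (intro finite_quotient) (auto simp: conn_rel_def)
  ultimately have "card {?r `` {v}, ?r `` {w}} \<le> card (V // ?r)"
    by (intro card_mono) auto
  then have "2 \<le> card (V // ?r)"
    using \<open>?r `` {v} \<noteq> ?r `` {w}\<close> by simp
  then show ?thesis unfolding num_components_def by simp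
qed

lemma two_le_out_degree:
  assumes q: "quiver V A s t" and connected: "num_components V A s t = 1"
    and chi: "chi V A s t \<ge> 2"
    and nonvanishing: "\<forall>a\<in>A. \<exists>x\<in>flow_polytope V A s t (\<lambda>_. 0). x a \<noteq> 0"
    and shared_tail: "\<forall>b\<in>A. s b \<noteq> t b \<longrightarrow> (\<exists>a\<in>A. a \<noteq> b \<and> s a = s b)"
    and "v \<in> V"
  shows "2 \<le> card {a\<in>A. s a = v}"
proof (rule ccontr)
  assume "\<not> ?thesis"
  then have at_most_one: "card {a\<in>A. s a = v} \<le> 1" by simp
  have "finite A" "finite V" and ends: "s ` A \<subseteq> V"
    using q unfolding quiver_def by auto
  have unique: "a = a'" if "a \<in> A" "a' \<in> A" "s a = v" "s a' = v" for a a'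
  proof -
    have "a \<in> {a\<in>A. s a = v}" "a' \<in> {a\<in>A. s a = v}" using that by simp_all
    then show ?thesis
      using at_most_one card_le_Suc0_iff_eq[of "{a\<in>A. s a = v}"] \<open>finite A\<close> by simp
  qed
  have out_loops: "\<forall>a\<in>A. s a = v \<longrightarrow> t a = v"
  proof (intro ballI impI)
    fix a assume a: "a \<in> A" "s a = v"
    show "t a = v"
    proof (rule ccontr)
      assume "t a \<noteq> v"
      then obtain a' where "a' \<in> A" "a' \<noteq> a" "s a' = s a" using shared_tail a by force
      then show False using unique[OF a(1) \<open>a' \<in> A\<close>] a(2) by simp
    qed
  qed
  have in_loops: "\<forall>a\<in>A. t a = v \<longrightarrow> s a = v"
  proof (intro ballI impI)
    fix a assume a: "a \<in> A" "t a = v"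
    show "s a = v"
    proof (rule ccontr)
      assume "s a \<noteq> v"
      then have "\<forall>x\<in>flow_polytope V A s t (\<lambda>_. 0). x a = 0"
        using flow_into_sink_vanishes[OF \<open>finite A\<close> \<open>v \<in> V\<close> out_loops] a by blast
      then show False using nonvanishing a(1) by blast
    qed
  qed
  show False
  proof (cases "V = {v}")
    case True
    then have "{a\<in>A. s a = v} = A" using ends by auto
    then have "card A \<le> 1" using at_most_one by simp
    then show False using chi connected True unfolding chi_def by simp
  next
    case False
    then obtain w where w: "w \<in> V" "w \<noteq> v" using \<open>v \<in> V\<close> by blast
    have "\<forall>a\<in>A. s a = v \<or> t a = v \<longrightarrow> s a = v \<and> t a = v"
      using out_loops in_loops by blast
    then have "num_components V A s t \<noteq> 1"
      by (rule num_components_ne_1_if_isolated[OF \<open>finite V\<close> \<open>v \<in> V\<close> w])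
    then show False using connected by simp
  qed
qed

lemma flow_polytope_reverse: "flow_polytope V A t s (\<lambda>_. 0) = flow_polytope V A s t (\<lambda>_. 0)"
  unfolding flow_polytope_def by auto

lemma num_components_reverse: "num_components V A t s = num_components V A s t"
proof -
  have "und_edges A t s = und_edges A s t" unfolding und_edges_def by blast
  then show ?thesis unfolding num_components_def conn_rel_def by simp
qed

lemma chi_reverse: "chi V A t s = chi V A s t"
  by (simp add: chi_def num_components_reverse)

lemma two_le_in_degree:
  assumes "quiver V A s t" and "num_components V A s t = 1" and "chi V A s t \<ge> 2"
    and nonvanishing: "\<forall>a\<in>A. \<exists>x\<in>flow_polytope V A s t (\<lambda>_. 0). x a \<noteq> 0"
    and shared_head: "\<forall>b\<in>A. s b \<noteq> t b \<longrightarrow> (\<exists>a\<in>A. a \<noteq> b \<and> t a = t b)"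
    and "v \<in> V"
  shows "2 \<le> card {a\<in>A. t a = v}"
proof (rule two_le_out_degree)
  show "quiver V A t s" using assms(1) by (auto simp: quiver_def)
  show "num_components V A t s = 1" using assms(2) by (simp add: num_components_reverse)
  show "chi V A t s \<ge> 2" using assms(3) by (simp add: chi_reverse)
  show "\<forall>a\<in>A. \<exists>x\<in>flow_polytope V A t s (\<lambda>_. 0). x a \<noteq> 0"
    using nonvanishing by (simp add: flow_polytope_reverse)
  show "\<forall>b\<in>A. t b \<noteq> s b \<longrightarrow> (\<exists>a\<in>A. a \<noteq> b \<and> t a = t b)"
    using shared_head by auto
qed (fact \<open>v \<in> V\<close>)

lemma double_card_le_card_if_out_degrees:
  assumes "finite A" "finite V" "s ` A \<subseteq> V" and "\<forall>v\<in>V. 2 \<le> card {a\<in>A. s a = v}"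
  shows "2 * card V \<le> card A"
proof -
  have "2 * card V = (\<Sum>v\<in>V. 2)" by simp
  also have "\<dots> \<le> (\<Sum>v\<in>V. card {a\<in>A. s a = v})" using assms(4) by (intro sum_mono) auto
  also have "\<dots> = card A" using sum.group[OF assms(1-3), of "\<lambda>_. 1 :: nat"] by simp
  finally show ?thesis .
qed

theorem proposition7p1:
  fixes V :: "'v set" and A :: "'a set" and s t :: "'a \<Rightarrow> 'v"
  assumes "quiver V A s t"
    and "prime_quiver V A s t"
    and "chi V A s t \<ge> 2"
    and "tight V A s t (\<lambda>_. 0)"
  shows "(\<forall>v\<in>V. card {a\<in>A. s a = v} \<ge> 2 \<and> card {a\<in>A. t a = v} \<ge> 2)
       \<and> int (card V) \<le> chi V A s t - 1
       \<and> int (card A) = int (card V) + chi V A s t - 1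
       \<and> int (card A) \<le> 2 * (chi V A s t - 1)"
proof -
  have fin: "finite A" "finite V" and ends: "s ` A \<subseteq> V"
    using assms(1) unfolding quiver_def by auto
  have connected: "num_components V A s t = 1"
    using assms(2) unfolding prime_quiver_def by blast
  have nonvanishing: "\<forall>a\<in>A. \<exists>x\<in>flow_polytope V A s t (\<lambda>_. 0). x a \<noteq> 0"
    using tight_nonvanishing[OF assms(4) fin(1)] by blast
  have degrees: "\<forall>v\<in>V. 2 \<le> card {a\<in>A. s a = v} \<and> 2 \<le> card {a\<in>A. t a = v}"
    using two_le_out_degree[OF assms(1) connected assms(3) nonvanishing]
      two_le_in_degree[OF assms(1) connected assms(3) nonvanishing]
      tight_shared_tail[OF assms(1,4)] tight_shared_head[OF assms(1,4)] by blast
  then have "2 * card V \<le> card A"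
    using double_card_le_card_if_out_degrees[OF fin ends] by blast
  moreover have "chi V A s t = int (card A) - int (card V) + 1"
    using connected by (simp add: chi_def)
  ultimately show ?thesis
    using degrees by auto
qed

end
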